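(* For every integer $n\ge 6$, the set $\mathcal{MUC}(n,3)$ is nonempty, and $\ell(n,3)\le \frac{7n}{3}-4$.
   Context: A bi-hypergraph $\mathcal H=(V,E)$ consists of a finite vertex set $V$ and a set $E$ of subsets of $V$, called edges, with no edge contained in another. It is $r$-uniform if every edge has exactly $r$ elements. A mapping $f:V\to\mathbb N$ is a proper coloring of $\mathcal H$ if $1<|f(e)|<|e|$ for every $e\in E$, where $f(e)=\{f(v):v\in e\}$. $\mathcal H$ is colorable if it has a proper coloring, and uncolorable otherwise. A subhypergraph of $\mathcal H$ is a bi-hypergraph $(V',E')$ with $V'\subseteq V$, $E'\subseteq E$. $\mathcal H$ is minimal uncolorable if it is uncolorable but every proper subhypergraph of it is colorable. $\mathcal{MUC}(n,r)$ is the set of minimal uncolorable $r$-uniform bi-hypergraphs with exactly $n$ vertices, and $\ell(n,r)$ is the minimum number of edges of a member of $\mathcal{MUC}(n,r)$ (and $\ell(n,r)=\infty$ if $\mathcal{MUC}(n,r)=\emptyset$). *)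

theory Defs
  imports Main "HOL-Library.Extended_Nat"
begin

definition bihypergraph :: "'a set \<Rightarrow> 'a set set \<Rightarrow> bool" where
  "bihypergraph V E \<longleftrightarrow> finite V \<and> (\<forall>e\<in>E. e \<subseteq> V)
     \<and> (\<forall>e\<in>E. \<forall>e'\<in>E. e \<subseteq> e' \<longrightarrow> e = e')"

definition uniform :: "nat \<Rightarrow> 'a set set \<Rightarrow> bool" where
  "uniform r E \<longleftrightarrow> (\<forall>e\<in>E. card e = r)"

definition proper_coloring :: "'a set set \<Rightarrow> ('a \<Rightarrow> nat) \<Rightarrow> bool" where
  "proper_coloring E f \<longleftrightarrow> (\<forall>e\<in>E. 1 < card (f ` e) \<and> card (f ` e) < card e)"

definition colorable :: "'a set set \<Rightarrow> bool" where
  "colorable E \<longleftrightarrow> (\<exists>f. proper_coloring E f)"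

definition subhypergraph :: "'a set \<Rightarrow> 'a set set \<Rightarrow> 'a set \<Rightarrow> 'a set set \<Rightarrow> bool" where
  "subhypergraph V' E' V E \<longleftrightarrow> bihypergraph V' E' \<and> V' \<subseteq> V \<and> E' \<subseteq> E"

definition minimal_uncolorable :: "'a set \<Rightarrow> 'a set set \<Rightarrow> bool" where
  "minimal_uncolorable V E \<longleftrightarrow> bihypergraph V E \<and> \<not> colorable E \<and>
     (\<forall>V' E'. subhypergraph V' E' V E \<and> (V', E') \<noteq> (V, E) \<longrightarrow> colorable E')"

text \<open>MUC(n,r), with vertices drawn from nat (all notions are isomorphism invariant).\<close>
definition MUC :: "nat \<Rightarrow> nat \<Rightarrow> (nat set \<times> nat set set) set" where
  "MUC n r = {(V, E). minimal_uncolorable V E \<and> uniform r E \<and> card V = n}"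

definition ell :: "nat \<Rightarrow> nat \<Rightarrow> enat" where
  "ell n r = (if MUC n r = {} then \<infinity>
              else enat (LEAST k. \<exists>H\<in>MUC n r. card (snd H) = k))"

end

theory Submission
  imports Defs
begin

(* A 3-uniform system that is uncolorable but becomes colorable after deleting any vertex
   contains a minimal uncolorable subsystem on the same vertex set, so it suffices to build
   such vertex-critical systems with at most 7n/3 - 4 triples.  For n >= 13 take the triples {i, i+1, i+2} and {i, i+1, i+3} mod n,
   plus {0, 4, 8} when n is even.  A coloring that two-colors all of these windows has
   period 4, which is impossible when n is odd and makes {0, 4, 8} monochromatic when n is
   even.  After deleting a vertex, the remaining path is colored alternately and then in
   equal pairs, the switch placed so that {0, 4, 8} also gets two colors.  This uses at
   most 2n + 1 triples; the cases n <= 12 and n = 14 are explicit systems checked by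
   computation. *)

definition two_colored :: "('a \<Rightarrow> 'b) \<Rightarrow> 'a \<Rightarrow> 'a \<Rightarrow> 'a \<Rightarrow> bool" where
  "two_colored f a b c \<longleftrightarrow> card {f a, f b, f c} = 2"

lemma two_colored_iff:
  "two_colored f a b c \<longleftrightarrow>
     f a = f b \<and> f b \<noteq> f c \<or> f a = f c \<and> f a \<noteq> f b \<or> f b = f c \<and> f a \<noteq> f b"
  unfolding two_colored_def by (auto simp: card_insert_if)

lemma two_colored_binary:
  fixes f :: "'a \<Rightarrow> nat"
  assumes "f a < 2" "f b < 2" "f c < 2" "\<not> (f a = f b \<and> f b = f c)"
  shows "two_colored f a b c"
  using assms unfolding two_colored_iff by auto

lemma proper_on_triple_iff_two_colored:
  assumes "a \<noteq> b" "a \<noteq> c" "b \<noteq> c"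
  shows "(1 < card (f ` {a,b,c}) \<and> card (f ` {a,b,c}) < card {a,b,c}) \<longleftrightarrow> two_colored f a b c"
  using assms unfolding two_colored_iff by (auto simp: card_insert_if)

lemma proper_coloring_two_colored:
  assumes "proper_coloring E f" "{a,b,c} \<in> E" "a \<noteq> b" "a \<noteq> c" "b \<noteq> c"
  shows "two_colored f a b c"
  using assms proper_on_triple_iff_two_colored[of a b c f] unfolding proper_coloring_def by blast

lemma colorable_subset: "colorable E \<Longrightarrow> E' \<subseteq> E \<Longrightarrow> colorable E'"
  unfolding colorable_def proper_coloring_def by blast

definition critical_triple_system :: "nat \<Rightarrow> nat set set \<Rightarrow> bool" where
  "critical_triple_system n E \<longleftrightarrow> finite E \<and> (\<forall>e\<in>E. e \<subseteq> {..<n} \<and> card e = 3) \<and>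
     \<not> colorable E \<and> (\<forall>v<n. colorable {e\<in>E. v \<notin> e})"

lemma bihypergraph_uniform:
  assumes "finite V" "\<forall>e\<in>E. e \<subseteq> V \<and> card e = r" "0 < r"
  shows "bihypergraph V E"
  unfolding bihypergraph_def
proof (intro conjI ballI impI)
  fix e e' assume "e \<in> E" "e' \<in> E" "e \<subseteq> e'"
  moreover have "finite e'" using \<open>e' \<in> E\<close> assms(2,3) card.infinite by force
  ultimately show "e = e'" using assms(2) card_subset_eq by metis
qed (use assms in auto)

text \<open>A smallest uncolorable subsystem is minimal uncolorable; criticality guarantees that
  it still covers every vertex.\<close>
lemma critical_triple_system_MUC:
  assumes crit: "critical_triple_system n E"
  obtains E' where "({..<n}, E') \<in> MUC n 3" "card E' \<le> card E"
proof -
  have fin: "finite E" and edges: "\<forall>e\<in>E. e \<subseteq> {..<n} \<and> card e = 3"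
    and unc: "\<not> colorable E" and del: "\<And>v. v < n \<Longrightarrow> colorable {e\<in>E. v \<notin> e}"
    using crit unfolding critical_triple_system_def by auto
  obtain E' where E': "E' \<subseteq> E" "\<not> colorable E'"
    and least: "\<And>E''. E'' \<subseteq> E \<Longrightarrow> \<not> colorable E'' \<Longrightarrow> card E' \<le> card E''"
    using ex_has_least_nat[of "\<lambda>E'. E' \<subseteq> E \<and> \<not> colorable E'" E card] unc by blast
  have fin': "finite E'" using fin E'(1) finite_subset by blast
  have smaller_colorable: "colorable E''" if "E'' \<subset> E'" for E''
    using least[of E''] that E'(1) psubset_card_mono[OF fin' that] by fastforce
  have cover: "{..<n} \<subseteq> \<Union>E'"
  proof
    fix v assume v: "v \<in> {..<n}"
    show "v \<in> \<Union>E'"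
    proof (rule ccontr)
      assume "v \<notin> \<Union>E'"
      then have "E' \<subseteq> {e\<in>E. v \<notin> e}" using E'(1) by blast
      then show False using colorable_subset del[of v] v E'(2) by auto
    qed
  qed
  have edges': "\<forall>e\<in>E'. e \<subseteq> {..<n} \<and> card e = 3" using edges E'(1) by blast
  have "minimal_uncolorable {..<n} E'"
    unfolding minimal_uncolorable_def
  proof (intro conjI allI impI)
    show "bihypergraph {..<n} E'" by (rule bihypergraph_uniform) (use edges' in auto)
    show "\<not> colorable E'" by (rule E'(2))
    fix V'' E'' assume sub: "subhypergraph V'' E'' {..<n} E' \<and> (V'', E'') \<noteq> ({..<n}, E')"
    then have "E'' \<noteq> E'"
      using cover unfolding subhypergraph_def bihypergraph_def by auto
    then show "colorable E''" using sub smaller_colorable unfolding subhypergraph_def by blast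
  qed
  then have "({..<n}, E') \<in> MUC n 3" using edges' unfolding MUC_def uniform_def by auto
  moreover have "card E' \<le> card E" using E'(1) fin card_mono by blast
  ultimately show thesis by (rule that)
qed

lemma ell_le_card:
  assumes "(V, E) \<in> MUC n r"
  shows "MUC n r \<noteq> {} \<and> ell n r \<noteq> \<infinity> \<and> the_enat (ell n r) \<le> card E"
proof -
  have "(LEAST k. \<exists>H\<in>MUC n r. card (snd H) = k) \<le> card E"
    by (rule Least_le) (use assms in force)
  then show ?thesis using assms unfolding ell_def by auto
qed

section \<open>Colorings with two-colored windows\<close>

lemma periodic_add_mult:
  fixes F :: "nat \<Rightarrow> 'b"
  assumes "\<And>j. F (j + p) = F j"
  shows "F (j + p * m) = F j"
proof (induction m)
  case (Suc m)
  have "F (j + p * Suc m) = F ((j + p * m) + p)" by (simp add: algebra_simps)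
  then show ?case using assms Suc by simp
qed simp

locale two_colored_windows =
  fixes F :: "nat \<Rightarrow> 'b"
  assumes window2: "\<And>i. two_colored F i (i + 1) (i + 2)"
    and window3: "\<And>i. two_colored F i (i + 1) (i + 3)"
begin

lemma equal_pair_step:
  assumes "F i = F (i + 1)"
  shows "F (i + 2) = F (i + 3)" "F (i + 4) = F i"
proof -
  have w: "two_colored F i (i + 1) (i + 2)" "two_colored F i (i + 1) (i + 3)"
    "two_colored F (i + 1) (i + 2) (i + 3)" "two_colored F (i + 2) (i + 3) (i + 4)"
    "two_colored F (i + 1) (i + 2) (i + 4)"
    using window2[of i] window3[of i] window2[of "i + 1"] window2[of "i + 2"] window3[of "i + 1"]
    by (simp_all add: numeral_eq_Suc)
  show "F (i + 2) = F (i + 3)" using w(1-3) assms unfolding two_colored_iff by auto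
  then show "F (i + 4) = F i" using w(3-5) assms unfolding two_colored_iff by auto
qed

text \<open>Once two consecutive colors agree, the colors come in pairs \<open>aabb aabb \<dots>\<close>;
  if they never agree, the colors alternate.\<close>
lemma eventually_period_4: "\<exists>i. \<forall>j\<ge>i. F (j + 4) = F j"
proof (cases "\<exists>i. F i = F (i + 1)")
  case True
  then obtain i where i: "F i = F (i + 1)" by blast
  have pairs: "F (i + 2 * k) = F (i + 2 * k + 1) \<and> F (i + 2 * k + 4) = F (i + 2 * k)" for k
  proof (induction k)
    case 0
    then show ?case using i equal_pair_step(2)[OF i] by simp
  next
    case (Suc k)
    then have "F (i + 2 * Suc k) = F (i + 2 * Suc k + 1)"
      using equal_pair_step(1)[of "i + 2 * k"] by (simp add: numeral_eq_Suc)
    then show ?case using equal_pair_step(2)[of "i + 2 * Suc k"] by simp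
  qed
  have "F (j + 4) = F j" if "i \<le> j" for j
  proof -
    obtain d where d: "j = i + d" using \<open>i \<le> j\<close> le_Suc_ex by blast
    define k where "k = d div 2"
    have "j = i + 2 * k \<or> j = i + 2 * k + 1" unfolding d k_def by presburger
    then show ?thesis
      using pairs[of k] pairs[of "k + 2"] by (auto simp: algebra_simps numeral_eq_Suc)
  qed
  then show ?thesis by blast
next
  case False
  have period_2: "F (j + 2) = F j" for j
  proof -
    have "F j \<noteq> F (j + 1)" "F (j + 1) \<noteq> F (j + 2)"
      using False by (auto simp flip: add.assoc)
    then show ?thesis using window2[of j] unfolding two_colored_iff by auto
  qed
  have "F (j + 4) = F j" for j using period_2[of j] period_2[of "j + 2"] by (simp add: numeral_eq_Suc)
  then show ?thesis by blast
qed

lemma period_4: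
  assumes per: "\<And>j. F (j + n) = F j" and "0 < n"
  shows "F (j + 4) = F j"
proof -
  obtain i where i: "\<And>j. i \<le> j \<Longrightarrow> F (j + 4) = F j" using eventually_period_4 by blast
  have "i \<le> j + n * i" using \<open>0 < n\<close> by (simp add: trans_le_add2)
  then have "F (j + n * i + 4) = F (j + n * i)" by (rule i)
  moreover have "F (j + n * i + 4) = F (j + 4 + n * i)" by (simp add: ac_simps)
  ultimately show ?thesis using periodic_add_mult[of F n, OF per] by simp
qed

lemma period_even:
  assumes per: "\<And>j. F (j + n) = F j" and "0 < n"
  shows "even n"
proof (rule ccontr)
  assume "odd n"
  have per4: "\<And>j. F (j + 4) = F j" using period_4[OF assms] .
  have "n mod 4 = 1 \<or> n mod 4 = 3" using \<open>odd n\<close> by presburger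
  have shift: "F (j + n mod 4) = F j" for j
  proof -
    have "F j = F (j + n mod 4 + 4 * (n div 4))"
      using per[of j] by (metis add.assoc add.commute div_mult_mod_eq mult.commute)
    also have "\<dots> = F (j + n mod 4)" by (rule periodic_add_mult[of F 4, OF per4])
    finally show ?thesis by simp
  qed
  have "F (j + 1) = F j" for j
    using \<open>n mod 4 = 1 \<or> n mod 4 = 3\<close>
  proof
    assume "n mod 4 = 1"
    then show ?thesis using shift[of j] by simp
  next
    assume "n mod 4 = 3"
    then show ?thesis using shift[of "j + 1"] per4[of j] by (simp add: ac_simps)
  qed
  then show False using window2[of 0] unfolding two_colored_iff by simp
qed

end

section \<open>The cyclic triple system\<close>

definition cyclic_triple :: "nat \<Rightarrow> nat \<Rightarrow> nat \<Rightarrow> nat set" where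
  "cyclic_triple n c i = {i mod n, (i + 1) mod n, (i + c) mod n}"

definition cyclic_system :: "nat \<Rightarrow> nat set set" where
  "cyclic_system n = cyclic_triple n 2 ` {..<n} \<union> cyclic_triple n 3 ` {..<n}"

text \<open>Every coloring of the cyclic system has period 4, so it is constant on \<open>{0, 4, 8}\<close>;
  for odd \<open>n\<close> the cyclic system alone is already uncolorable.\<close>
definition augmented_cyclic_system :: "nat \<Rightarrow> nat set set" where
  "augmented_cyclic_system n =
     (if odd n then cyclic_system n else insert {0, 4, 8} (cyclic_system n))"

lemma add_mod_neq:
  fixes i a b n :: nat
  assumes "a < b" "b < n"
  shows "(i + a) mod n \<noteq> (i + b) mod n"
proof
  assume "(i + a) mod n = (i + b) mod n"
  then have "n dvd b - a"
    using mod_eq_dvd_iff_nat[of "i + a" "i + b" n] assms by simp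
  then show False using assms nat_dvd_not_less[of "b - a" n] by simp
qed

lemma cyclic_triple_distinct:
  fixes n c i :: nat
  assumes "4 \<le> n" "c = 2 \<or> c = 3"
  shows "i mod n \<noteq> (i + 1) mod n" "i mod n \<noteq> (i + c) mod n" "(i + 1) mod n \<noteq> (i + c) mod n"
  using add_mod_neq[of 0 1 n i] add_mod_neq[of 0 c n i] add_mod_neq[of 1 c n i] assms by auto

lemma cyclic_triple_mod: "cyclic_triple n c (i mod n) = cyclic_triple n c i"
  unfolding cyclic_triple_def by (simp add: mod_add_left_eq mod_Suc_eq)

lemma cyclic_triple_in_cyclic_system:
  assumes "0 < n" "c = 2 \<or> c = 3"
  shows "cyclic_triple n c i \<in> cyclic_system n"
proof -
  have "cyclic_triple n c (i mod n) \<in> cyclic_system n"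
    using assms unfolding cyclic_system_def by auto
  then show ?thesis by (simp add: cyclic_triple_mod)
qed

lemma card_cyclic_triple:
  assumes "4 \<le> n" "c = 2 \<or> c = 3"
  shows "card (cyclic_triple n c i) = 3"
  using cyclic_triple_distinct[OF assms, of i] unfolding cyclic_triple_def by (simp add: card_insert_if)

lemma augmented_cyclic_system_edges:
  assumes "9 \<le> n" "e \<in> augmented_cyclic_system n"
  shows "e \<subseteq> {..<n} \<and> card e = 3"
proof (cases "e = {0, 4, 8}")
  case False
  then obtain c i where "c = 2 \<or> c = 3" "e = cyclic_triple n c i"
    using assms(2) unfolding augmented_cyclic_system_def cyclic_system_def
    by (auto split: if_splits)
  then show ?thesis
    using card_cyclic_triple[of n c i] assms(1) unfolding cyclic_triple_def by auto
qed (use assms(1) in auto)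

lemma two_colored_windows_cyclic:
  assumes "proper_coloring (cyclic_system n) f" "4 \<le> n"
  shows "two_colored_windows (\<lambda>i. f (i mod n))"
proof -
  have "two_colored (\<lambda>i. f (i mod n)) i (i + 1) (i + c)" if "c = 2 \<or> c = 3" for i c
  proof -
    have "{i mod n, (i + 1) mod n, (i + c) mod n} \<in> cyclic_system n"
      using cyclic_triple_in_cyclic_system[of n c i] assms(2) that
      unfolding cyclic_triple_def by simp
    then have "two_colored f (i mod n) ((i + 1) mod n) ((i + c) mod n)"
      using proper_coloring_two_colored[OF assms(1)] cyclic_triple_distinct[OF assms(2) that]
      by blast
    then show ?thesis unfolding two_colored_def by simp
  qed
  from this[of 2] this[of 3] show ?thesis
    by unfold_locales (simp_all add: numeral_eq_Suc)
qed

lemma cyclic_system_card_le: "card (cyclic_system n) \<le> 2 * n"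
proof -
  have "card (cyclic_system n) \<le> card (cyclic_triple n 2 ` {..<n}) + card (cyclic_triple n 3 ` {..<n})"
    unfolding cyclic_system_def by (rule card_Un_le)
  also have "\<dots> \<le> n + n" using card_image_le[of "{..<n}"] by (intro add_mono) auto
  finally show ?thesis by simp
qed

lemma augmented_cyclic_system_card_le:
  "card (augmented_cyclic_system n) \<le> 2 * n + (if odd n then 0 else 1)"
  using cyclic_system_card_le[of n] unfolding augmented_cyclic_system_def
  by (auto simp: card_insert_if cyclic_system_def)

lemma augmented_cyclic_system_uncolorable:
  assumes "9 \<le> n"
  shows "\<not> colorable (augmented_cyclic_system n)"
proof
  assume "colorable (augmented_cyclic_system n)"
  then obtain f where f: "proper_coloring (augmented_cyclic_system n) f"
    unfolding colorable_def by blast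
  have "cyclic_system n \<subseteq> augmented_cyclic_system n"
    unfolding augmented_cyclic_system_def by auto
  then have "proper_coloring (cyclic_system n) f"
    using f unfolding proper_coloring_def by blast
  then interpret two_colored_windows "\<lambda>i. f (i mod n)"
    using assms by (intro two_colored_windows_cyclic) auto
  have per: "f ((j + n) mod n) = f (j mod n)" for j by simp
  have "even n" using period_even[OF per] assms by simp
  then have "two_colored f 0 4 8"
    using proper_coloring_two_colored[OF f, of 0 4 8] unfolding augmented_cyclic_system_def by simp
  moreover have "f (4 mod n) = f (0 mod n)" "f (8 mod n) = f (4 mod n)"
    using period_4[OF per, of 0] period_4[OF per, of 4] assms by simp_all
  ultimately show False using assms unfolding two_colored_iff by simp
qed

section \<open>Deleting a vertex from the cyclic system\<close>

text \<open>The colorings of the cyclic system with one vertex deleted: after rotating the deleted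
  vertex to position \<open>n - 1\<close>, color the path \<open>0, \<dots>, n - 2\<close> alternately up to position \<open>s\<close>
  and in equal pairs afterwards.\<close>
definition alternating_then_paired :: "nat \<Rightarrow> nat \<Rightarrow> nat" where
  "alternating_then_paired s d = (if d \<le> s then d mod 2 else (s + (d - s) div 2) mod 2)"

lemma alternating_then_paired_less_2: "alternating_then_paired s d < 2"
  unfolding alternating_then_paired_def by auto

lemma alternating_then_paired_after: "alternating_then_paired s (s + t) = (s + t div 2) mod 2"
  unfolding alternating_then_paired_def by (cases t) auto

lemma two_colored_windows_alternating_then_paired:
  "two_colored_windows (alternating_then_paired s)"
proof -
  let ?g = "alternating_then_paired s"
  have not_constant: "\<not> (?g d = ?g (d + 1) \<and> ?g (d + 1) = ?g (d + c))" if "c = 2 \<or> c = 3" for d c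
  proof (cases "d + 1 \<le> s")
    case True
    have "d mod 2 \<noteq> (d + 1) mod 2" by presburger
    then have "?g d \<noteq> ?g (d + 1)" using True unfolding alternating_then_paired_def by simp
    then show ?thesis by blast
  next
    case False
    then obtain t where t: "d = s + t" using le_Suc_ex[of s d] by auto
    have g: "?g (d + k) = (s + (t + k) div 2) mod 2" for k
      using alternating_then_paired_after[of s "t + k"] unfolding t by (simp add: add.assoc)
    have "(s + t div 2) mod 2 \<noteq> (s + (t + 2) div 2) mod 2" by presburger
    then have "?g d \<noteq> ?g (d + 2)" using g[of 0] g[of 2] by simp
    moreover have "(s + t div 2) mod 2 \<noteq> (s + (t + 1) div 2) mod 2 \<or>
        (s + (t + 1) div 2) mod 2 \<noteq> (s + (t + 3) div 2) mod 2"
      by (cases "even t") (auto elim!: evenE oddE, presburger+)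
    then have "?g d \<noteq> ?g (d + 1) \<or> ?g (d + 1) \<noteq> ?g (d + 3)" using g[of 0] g[of 1] g[of 3] by simp
    ultimately show ?thesis using that by auto
  qed
  show ?thesis
  proof
    fix i
    show "two_colored ?g i (i + 1) (i + 2)" "two_colored ?g i (i + 1) (i + 3)"
      using not_constant[of 2 i] not_constant[of 3 i]
      by (auto intro!: two_colored_binary simp: alternating_then_paired_less_2)
  qed
qed

lemma two_colored_cyclic_triple_avoiding_last:
  assumes "two_colored_windows g" "two_colored g (n - 3) (n - 2) 0"
    and "4 \<le> n" "c = 2 \<or> c = 3" "p < n" "n - 1 \<notin> cyclic_triple n c p"
  shows "two_colored g (p mod n) ((p + 1) mod n) ((p + c) mod n)"
proof (cases "p + c < n")
  case True
  then show ?thesis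
    using assms(1,4) two_colored_windows.window2 two_colored_windows.window3 by auto
next
  case False
  then have "p = n - 1 \<or> p = n - 2 \<or> c = 3 \<and> p = n - 3" using assms(4,5) by auto
  moreover have "(n - 2 + 1) mod n = n - 1" "(n - 3 + 1) mod n = n - 2" "(n - 3 + 3) mod n = 0"
    using assms(3) by auto
  moreover have "p mod n = p" using assms(5) by simp
  ultimately have "c = 3 \<and> p = n - 3" using assms(6) unfolding cyclic_triple_def by auto
  moreover have "(n - 3) mod n = n - 3" using assms(3) by simp
  ultimately show ?thesis using assms(2) \<open>(n - 3 + 1) mod n = n - 2\<close> \<open>(n - 3 + 3) mod n = 0\<close>
    by simp
qed

lemma two_colored_rotated_cyclic_triple:
  assumes "two_colored_windows g" "two_colored g (n - 3) (n - 2) 0"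
    and "4 \<le> n" "c = 2 \<or> c = 3" "v < n" "v \<notin> cyclic_triple n c i"
  shows "two_colored (\<lambda>j. g ((j + (n - Suc v)) mod n)) (i mod n) ((i + 1) mod n) ((i + c) mod n)"
proof -
  define a where "a = n - Suc v"
  define p where "p = (i + a) mod n"
  have rotate: "((i + k) mod n + a) mod n = (p + k) mod n" for k
  proof -
    have "((i + k) mod n + a) mod n = (i + k + a) mod n" by (rule mod_add_left_eq)
    also have "\<dots> = (p + k) mod n" unfolding p_def by (simp only: mod_add_left_eq) (simp add: ac_simps)
    finally show ?thesis .
  qed
  have to_last: "x = v" if "x < n" "(x + a) mod n = n - 1" for x
  proof (rule ccontr)
    assume "x \<noteq> v"
    then have "(a + x) mod n \<noteq> (a + v) mod n"
      using add_mod_neq[of x v n a] add_mod_neq[of v x n a] that(1) assms(5) by fastforce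
    moreover have "(a + v) mod n = n - 1" unfolding a_def using assms(5) by simp
    ultimately show False using that(2) by (simp add: add.commute)
  qed
  have not_last: "(p + k) mod n \<noteq> n - 1" if "k \<in> {0, 1, c}" for k
  proof
    assume "(p + k) mod n = n - 1"
    then have "(i + k) mod n = v" using to_last[of "(i + k) mod n"] rotate[of k] assms(3) by simp
    moreover have "(i + k) mod n \<in> cyclic_triple n c i"
      using that unfolding cyclic_triple_def by auto
    ultimately show False using assms(6) by simp
  qed
  have "p mod n \<noteq> n - 1" "(p + 1) mod n \<noteq> n - 1" "(p + c) mod n \<noteq> n - 1"
    using not_last[of 0] not_last[of 1] not_last[of c] by simp_all
  then have "n - 1 \<notin> cyclic_triple n c p" unfolding cyclic_triple_def by auto
  then have "two_colored g (p mod n) ((p + 1) mod n) ((p + c) mod n)"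
    using two_colored_cyclic_triple_avoiding_last[OF assms(1-4)] assms(3) p_def by simp
  then show ?thesis
    using rotate[of 0] rotate[of 1] rotate[of c] unfolding two_colored_def a_def by simp
qed

lemma colorable_delete_augmented_cyclic_system:
  fixes g :: "nat \<Rightarrow> nat"
  assumes "9 \<le> n" "v < n" "two_colored_windows g" "two_colored g (n - 3) (n - 2) 0"
    and "even n \<Longrightarrow> v \<notin> {0, 4, 8} \<Longrightarrow> two_colored (\<lambda>j. g ((j + (n - Suc v)) mod n)) 0 4 8"
  shows "colorable {e \<in> augmented_cyclic_system n. v \<notin> e}"
proof -
  let ?f = "\<lambda>j. g ((j + (n - Suc v)) mod n)"
  have "1 < card (?f ` e) \<and> card (?f ` e) < card e"
    if e: "e \<in> augmented_cyclic_system n" "v \<notin> e" for e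
  proof -
    have "e \<in> cyclic_system n \<or> even n \<and> e = {0, 4, 8}"
      using e(1) unfolding augmented_cyclic_system_def by (auto split: if_splits)
    then show ?thesis
    proof
      assume "e \<in> cyclic_system n"
      then obtain c i where ci: "c = 2 \<or> c = 3" "e = cyclic_triple n c i"
        unfolding cyclic_system_def by auto
      have "4 \<le> n" using assms(1) by simp
      note distinct = cyclic_triple_distinct[OF this ci(1), of i]
      moreover have "two_colored ?f (i mod n) ((i + 1) mod n) ((i + c) mod n)"
        using two_colored_rotated_cyclic_triple[OF assms(3,4) \<open>4 \<le> n\<close> ci(1) assms(2)] e(2) ci(2)
        by blast
      ultimately show ?thesis
        unfolding ci(2) cyclic_triple_def by (rule proper_on_triple_iff_two_colored[THEN iffD2])
    next
      assume extra: "even n \<and> e = {0, 4, 8}"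
      have distinct: "(0::nat) \<noteq> 4" "(0::nat) \<noteq> 8" "(4::nat) \<noteq> 8" by simp_all
      have "v \<notin> {0, 4, 8}" using e(2) extra by simp
      then have "two_colored ?f 0 4 8" using assms(5) extra by blast
      with proper_on_triple_iff_two_colored[OF distinct, of ?f] show ?thesis
        unfolding conjunct2[OF extra] by (rule iffD2)
    qed
  qed
  then have "proper_coloring {e \<in> augmented_cyclic_system n. v \<notin> e} ?f"
    unfolding proper_coloring_def by blast
  then show ?thesis unfolding colorable_def by blast
qed

lemma alternating_wrap:
  assumes "4 \<le> n"
  shows "two_colored (alternating_then_paired n) (n - 3) (n - 2) 0"
proof (rule two_colored_binary)
  have "n - 2 = Suc (n - 3)" using assms by simp
  then have "(n - 3) mod 2 \<noteq> (n - 2) mod 2" by (simp add: mod2_eq_if)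
  then show "\<not> (alternating_then_paired n (n - 3) = alternating_then_paired n (n - 2) \<and>
      alternating_then_paired n (n - 2) = alternating_then_paired n 0)"
    unfolding alternating_then_paired_def by simp
qed (rule alternating_then_paired_less_2)+

lemma alternating_then_paired_wrap:
  assumes "even n" "even s" "s + 4 \<le> n"
  shows "two_colored (alternating_then_paired s) (n - 3) (n - 2) 0"
proof (rule two_colored_binary)
  have "even (n - 4 - s)" using assms by simp
  then obtain u where "n - 4 - s = 2 * u" by (rule evenE)
  then have u: "n - 3 = s + (2 * u + 1)" "n - 2 = s + (2 * u + 2)" using assms(3) by simp_all
  have "(s + (2 * u + 1) div 2) mod 2 \<noteq> (s + (2 * u + 2) div 2) mod 2" by presburger
  then show "\<not> (alternating_then_paired s (n - 3) = alternating_then_paired s (n - 2) \<and>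
      alternating_then_paired s (n - 2) = alternating_then_paired s 0)"
    by (simp only: u alternating_then_paired_after) simp
qed (rule alternating_then_paired_less_2)+

lemma alternating_then_paired_separates:
  assumes "q + 4 \<le> r" "even (r - q)" "s = 2 * ((r - 1) div 2)"
  shows "alternating_then_paired s q \<noteq> alternating_then_paired s r"
proof -
  have "q \<le> s" "q mod 2 = r mod 2" using assms by presburger+
  then have q: "alternating_then_paired s q = r mod 2" unfolding alternating_then_paired_def by simp
  have "even s" using assms(3) by simp
  then have "alternating_then_paired s (s + 1) = 0" "alternating_then_paired s (s + 2) = 1"
    using alternating_then_paired_after[of s 1] alternating_then_paired_after[of s 2] by presburger+
  moreover have "r = s + 1 \<and> odd r \<or> r = s + 2 \<and> even r" using assms(1,3) by presburger
  ultimately show ?thesis using q by auto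
qed

lemma extra_triple_rotated_positions:
  assumes "even n" "12 \<le> n" "v < n" "v \<notin> {0, 4, 8}"
  obtains x y where "x \<in> {0, 4, 8}" "y \<in> {0, 4, 8}"
    "(x + (n - Suc v)) mod n + 4 \<le> (y + (n - Suc v)) mod n"
    "even ((y + (n - Suc v)) mod n - (x + (n - Suc v)) mod n)" "(y + (n - Suc v)) mod n + 2 \<le> n"
proof -
  have P0: "(0 + (n - Suc v)) mod n = n - 1 - v" using assms(3) by simp
  consider "v < 4" | "4 < v" "v < 8" | "8 < v" using assms(4) by fastforce
  then show thesis
  proof cases
    case 1
    have "(8 + (n - Suc v)) mod n = (7 - v + n) mod n"
      using 1 assms(3) by (intro arg_cong[where f = "\<lambda>x. x mod n"]) simp
    also have "\<dots> = 7 - v" using assms(2) by (simp only: mod_add_self2) simp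
    finally show thesis using P0 1 assms by (intro that[of 8 0]) simp_all
  next
    case 2
    have "(4 + (n - Suc v)) mod n = n + 3 - v" using 2 assms(3) by simp
    then show thesis using P0 2 assms by (intro that[of 0 4]) simp_all
  next
    case 3
    have "(4 + (n - Suc v)) mod n = n + 3 - v" "(8 + (n - Suc v)) mod n = n + 7 - v"
      using 3 assms(3) by simp_all
    then show thesis using 3 assms by (intro that[of 4 8]) simp_all
  qed
qed

lemma colorable_delete_vertex_augmented_cyclic_system:
  assumes "9 \<le> n" "odd n \<or> 12 \<le> n" "v < n"
  shows "colorable {e \<in> augmented_cyclic_system n. v \<notin> e}"
proof (cases "odd n \<or> v \<in> {0, 4, 8}")
  case True
  show ?thesis
    by (rule colorable_delete_augmented_cyclic_system[where g = "alternating_then_paired n"])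
      (use assms True alternating_wrap two_colored_windows_alternating_then_paired in auto)
next
  case False
  then have "even n" "v \<notin> {0, 4, 8}" "12 \<le> n" using assms(2) by auto
  then obtain x y where xy: "x \<in> {0, 4, 8}" "y \<in> {0, 4, 8}"
    and qr: "(x + (n - Suc v)) mod n + 4 \<le> (y + (n - Suc v)) mod n"
      "even ((y + (n - Suc v)) mod n - (x + (n - Suc v)) mod n)" "(y + (n - Suc v)) mod n + 2 \<le> n"
    using extra_triple_rotated_positions assms(3) by blast
  define q where "q = (x + (n - Suc v)) mod n"
  define r where "r = (y + (n - Suc v)) mod n"
  define s where "s = 2 * ((r - 1) div 2)"
  have "q + 4 \<le> r" "even (r - q)" "r + 2 \<le> n" using qr unfolding q_def r_def by simp_all
  have "even s" "s + 4 \<le> n" unfolding s_def using \<open>r + 2 \<le> n\<close> \<open>even n\<close> \<open>12 \<le> n\<close> by presburger+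
  let ?g = "alternating_then_paired s"
  show ?thesis
  proof (rule colorable_delete_augmented_cyclic_system[where g = ?g])
    show "two_colored ?g (n - 3) (n - 2) 0"
      using alternating_then_paired_wrap \<open>even n\<close> \<open>even s\<close> \<open>s + 4 \<le> n\<close> by blast
    have "?g q \<noteq> ?g r"
      using alternating_then_paired_separates[OF \<open>q + 4 \<le> r\<close> \<open>even (r - q)\<close> s_def] .
    then show "two_colored (\<lambda>j. ?g ((j + (n - Suc v)) mod n)) 0 4 8"
      using xy unfolding q_def r_def
      by (intro two_colored_binary) (auto simp: alternating_then_paired_less_2)
  qed (use assms two_colored_windows_alternating_then_paired in auto)
qed

section \<open>Small cases\<close>

definition triangles :: "(nat \<times> nat \<times> nat) list \<Rightarrow> nat set set" where
  "triangles T = (\<lambda>(a, b, c). {a, b, c}) ` set T"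

definition color_classes :: "nat set \<times> nat set \<Rightarrow> nat \<Rightarrow> nat" where
  "color_classes AB j = (if j \<in> fst AB then 1 else if j \<in> snd AB then 2 else 0)"

lemma card_triangles_le: "card (triangles T) \<le> length T"
  unfolding triangles_def by (rule le_trans[OF card_image_le[OF finite_set] card_length])

lemma list_all_triple:
  assumes "list_all (\<lambda>(a, b, c). P a b c) T" "(a, b, c) \<in> set T"
  shows "P a b c"
  using bspec[OF assms(1)[unfolded list_all_iff] assms(2)] by simp

lemma critical_triple_system_triangles:
  assumes wf: "list_all (\<lambda>(a, b, c). a \<noteq> b \<and> a \<noteq> c \<and> b \<noteq> c \<and> a < n \<and> b < n \<and> c < n) T"
    and del: "\<forall>v<n. list_all (\<lambda>(a, b, c). v \<in> {a, b, c} \<or> two_colored (color_classes (C ! v)) a b c) T"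
    and unc: "\<And>f :: nat \<Rightarrow> nat. list_all (\<lambda>(a, b, c). two_colored f a b c) T \<Longrightarrow> False"
  shows "critical_triple_system n (triangles T)"
  unfolding critical_triple_system_def
proof (intro conjI ballI allI impI)
  have wf': "a \<noteq> b \<and> a \<noteq> c \<and> b \<noteq> c \<and> a < n \<and> b < n \<and> c < n" if "(a, b, c) \<in> set T" for a b c
    using list_all_triple[OF wf that] .
  show "finite (triangles T)" unfolding triangles_def by simp
  fix e assume e: "e \<in> triangles T"
  obtain a b c where "(a, b, c) \<in> set T" "e = {a, b, c}" using e unfolding triangles_def by auto
  then show "e \<subseteq> {..<n}" "card e = 3" using wf' by auto
next
  show "\<not> colorable (triangles T)"
  proof
    assume "colorable (triangles T)"
    then obtain f where f: "proper_coloring (triangles T) f" unfolding colorable_def by blast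
    have "two_colored f a b c" if "(a, b, c) \<in> set T" for a b c
    proof (rule proper_coloring_two_colored[OF f])
      show "{a, b, c} \<in> triangles T" using that unfolding triangles_def by force
      show "a \<noteq> b" "a \<noteq> c" "b \<noteq> c" using list_all_triple[OF wf that] by simp_all
    qed
    then have "list_all (\<lambda>(a, b, c). two_colored f a b c) T" unfolding list_all_iff by auto
    then show False by (rule unc)
  qed
next
  fix v assume "v < n"
  let ?f = "color_classes (C ! v)"
  have "1 < card (?f ` e) \<and> card (?f ` e) < card e" if e: "e \<in> triangles T" "v \<notin> e" for e
  proof -
    obtain a b c where abc: "(a, b, c) \<in> set T" "e = {a, b, c}"
      using e(1) unfolding triangles_def by auto
    then have "a \<noteq> b" "a \<noteq> c" "b \<noteq> c" using list_all_triple[OF wf abc(1)] by simp_all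
    moreover have "two_colored ?f a b c"
      using list_all_triple[OF del[rule_format, OF \<open>v < n\<close>] abc(1)] abc(2) e(2) by simp
    ultimately show ?thesis unfolding abc(2) by (rule proper_on_triple_iff_two_colored[THEN iffD2])
  qed
  then show "colorable {e \<in> triangles T. v \<notin> e}"
    unfolding colorable_def proper_coloring_def by blast
qed

definition triples_6 :: "(nat \<times> nat \<times> nat) list" where
  "triples_6 =
     [(0, 1, 2), (0, 1, 3), (0, 2, 5), (0, 3, 4), (0, 4, 5), (1, 2, 4), (1, 4, 5),
      (2, 3, 4), (2, 3, 5), (0, 2, 4)]"

definition deletion_colorings_6 :: "(nat set \<times> nat set) list" where
  "deletion_colorings_6 =
     [({4, 5}, {}), ({4, 5}, {}), ({3, 5}, {}), ({2, 5}, {}),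
      ({2, 3}, {}), ({2, 3}, {})]"

lemma critical_triple_system_6: "critical_triple_system 6 (triangles triples_6)"
proof (rule critical_triple_system_triangles[where C = deletion_colorings_6])
  fix f :: "nat \<Rightarrow> nat"
  assume "list_all (\<lambda>(a, b, c). two_colored f a b c) triples_6"
  then show False unfolding triples_6_def two_colored_iff by simp smt
qed code_simp+

definition triples_7 :: "(nat \<times> nat \<times> nat) list" where
  "triples_7 =
     [(0, 1, 2), (0, 1, 3), (0, 2, 6), (0, 4, 5), (0, 5, 6), (1, 2, 4), (1, 5, 6),
      (2, 3, 4), (2, 3, 5), (3, 4, 5), (3, 4, 6), (0, 3, 4)]"

definition deletion_colorings_7 :: "(nat set \<times> nat set) list" where
  "deletion_colorings_7 =
     [({4, 5}, {}), ({4, 5, 6}, {}), ({3, 5}, {}), ({2, 5}, {}),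
      ({2, 3, 6}, {}), ({2, 3}, {}), ({1, 4, 5}, {})]"

lemma critical_triple_system_7: "critical_triple_system 7 (triangles triples_7)"
proof (rule critical_triple_system_triangles[where C = deletion_colorings_7])
  fix f :: "nat \<Rightarrow> nat"
  assume "list_all (\<lambda>(a, b, c). two_colored f a b c) triples_7"
  then show False unfolding triples_7_def two_colored_iff by simp smt
qed code_simp+

definition triples_8 :: "(nat \<times> nat \<times> nat) list" where
  "triples_8 =
     [(0, 1, 5), (0, 1, 6), (0, 2, 4), (0, 4, 5), (0, 5, 6), (0, 5, 7), (1, 2, 5),
      (1, 3, 4), (1, 5, 7), (2, 3, 4), (2, 3, 5), (2, 6, 7), (4, 5, 6)]"

definition deletion_colorings_8 :: "(nat set \<times> nat set) list" where
  "deletion_colorings_8 =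
     [({4, 5, 7}, {}), ({4, 5, 7}, {}), ({3, 5, 6}, {}), ({2, 5, 6}, {}),
      ({5, 6}, {}), ({4, 6}, {}), ({4, 5}, {}), ({1, 4, 5}, {})]"

lemma critical_triple_system_8: "critical_triple_system 8 (triangles triples_8)"
proof (rule critical_triple_system_triangles[where C = deletion_colorings_8])
  fix f :: "nat \<Rightarrow> nat"
  assume "list_all (\<lambda>(a, b, c). two_colored f a b c) triples_8"
  then show False unfolding triples_8_def two_colored_iff by simp smt
qed code_simp+

definition triples_9 :: "(nat \<times> nat \<times> nat) list" where
  "triples_9 =
     [(0, 1, 2), (0, 1, 3), (0, 2, 8), (0, 6, 7), (0, 7, 8), (1, 2, 4), (1, 7, 8),
      (2, 3, 4), (2, 3, 5), (3, 4, 5), (3, 4, 6), (4, 5, 6), (4, 5, 7), (5, 6, 7),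
      (5, 6, 8), (0, 4, 5)]"

definition deletion_colorings_9 :: "(nat set \<times> nat set) list" where
  "deletion_colorings_9 =
     [({4, 5, 8}, {}), ({3, 5, 7, 8}, {}), ({3, 5, 7}, {}), ({2, 5, 7}, {}),
      ({2, 3, 7, 8}, {}), ({2, 3, 7}, {}), ({2, 4, 5, 8}, {3}), ({2, 4, 5, 8}, {3, 6}),
      ({2, 4, 5}, {3, 6, 7})]"

lemma critical_triple_system_9: "critical_triple_system 9 (triangles triples_9)"
proof (rule critical_triple_system_triangles[where C = deletion_colorings_9])
  fix f :: "nat \<Rightarrow> nat"
  assume "list_all (\<lambda>(a, b, c). two_colored f a b c) triples_9"
  then show False unfolding triples_9_def two_colored_iff by simp smt
qed code_simp+

definition triples_10 :: "(nat \<times> nat \<times> nat) list" where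
  "triples_10 =
     [(0, 1, 2), (0, 1, 3), (0, 2, 9), (0, 7, 8), (0, 8, 9), (1, 2, 4), (1, 8, 9),
      (2, 3, 4), (2, 3, 5), (3, 4, 5), (3, 4, 6), (4, 5, 6), (4, 5, 7), (5, 6, 7),
      (5, 6, 8), (6, 7, 8), (6, 7, 9), (0, 4, 6)]"

definition deletion_colorings_10 :: "(nat set \<times> nat set) list" where
  "deletion_colorings_10 =
     [({4, 5, 8, 9}, {}), ({4, 5, 8, 9}, {}), ({3, 6, 7}, {9}), ({2, 9}, {6, 7}),
      ({2, 3, 7, 8}, {}), ({2, 3, 6, 8}, {}), ({2, 3, 7, 9}, {}), ({2, 3, 6, 9}, {}),
      ({2, 3, 6, 7}, {}), ({2, 3, 6, 7}, {})]"

lemma critical_triple_system_10: "critical_triple_system 10 (triangles triples_10)"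
proof (rule critical_triple_system_triangles[where C = deletion_colorings_10])
  fix f :: "nat \<Rightarrow> nat"
  assume "list_all (\<lambda>(a, b, c). two_colored f a b c) triples_10"
  then show False unfolding triples_10_def two_colored_iff by simp smt
qed code_simp+

definition triples_11 :: "(nat \<times> nat \<times> nat) list" where
  "triples_11 =
     [(0, 1, 2), (0, 1, 3), (0, 2, 10), (0, 8, 9), (0, 9, 10), (1, 2, 4), (1, 9, 10),
      (2, 3, 4), (2, 3, 5), (3, 4, 5), (3, 4, 6), (4, 5, 6), (4, 5, 7), (5, 6, 7),
      (5, 6, 8), (6, 7, 8), (6, 7, 9), (7, 8, 9), (7, 8, 10), (0, 4, 7)]"

definition deletion_colorings_11 :: "(nat set \<times> nat set) list" where
  "deletion_colorings_11 =
     [({4, 5, 8, 9}, {}), ({4, 5, 8, 9, 10}, {}), ({3, 5, 7, 9}, {}), ({2, 5, 7, 9}, {}),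
      ({2, 3, 10}, {7, 8}), ({2, 3, 7, 9}, {}), ({2, 3, 7, 9}, {}), ({2, 3, 6, 9}, {}),
      ({2, 3, 6, 7, 10}, {}), ({2, 3, 6, 7}, {}), ({2, 4, 6, 7}, {3, 5, 8, 9})]"

lemma critical_triple_system_11: "critical_triple_system 11 (triangles triples_11)"
proof (rule critical_triple_system_triangles[where C = deletion_colorings_11])
  fix f :: "nat \<Rightarrow> nat"
  assume "list_all (\<lambda>(a, b, c). two_colored f a b c) triples_11"
  then show False unfolding triples_11_def two_colored_iff by simp smt
qed code_simp+

definition triples_12 :: "(nat \<times> nat \<times> nat) list" where
  "triples_12 =
     [(0, 1, 2), (0, 1, 3), (0, 2, 11), (0, 9, 10), (0, 10, 11), (1, 2, 4), (1, 10, 11),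
      (2, 3, 4), (2, 3, 5), (3, 4, 5), (3, 4, 6), (4, 5, 6), (4, 5, 7), (5, 6, 7),
      (5, 6, 8), (6, 7, 8), (6, 7, 9), (7, 8, 9), (7, 8, 10), (8, 9, 10), (8, 9, 11),
      (0, 4, 8)]"

definition deletion_colorings_12 :: "(nat set \<times> nat set) list" where
  "deletion_colorings_12 =
     [({4, 5, 8, 9}, {11}), ({4, 5, 8, 9}, {11}), ({3, 5, 8, 9}, {11}), ({2, 11}, {5, 8, 9}),
      ({2, 3, 6, 9, 10}, {}), ({2, 3, 11}, {8, 9}), ({2, 3, 7, 9, 10, 11}, {8}), ({2, 3, 6, 8, 10}, {}),
      ({2, 3, 6, 7, 10}, {}), ({2, 4, 5, 8, 10}, {3, 6, 7}), ({2, 4, 5, 8, 9}, {3, 6, 7}), ({2, 4, 6, 8}, {3, 5, 7, 9, 10})]"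

lemma critical_triple_system_12: "critical_triple_system 12 (triangles triples_12)"
proof (rule critical_triple_system_triangles[where C = deletion_colorings_12])
  fix f :: "nat \<Rightarrow> nat"
  assume "list_all (\<lambda>(a, b, c). two_colored f a b c) triples_12"
  then show False unfolding triples_12_def two_colored_iff by simp smt
qed code_simp+

definition triples_14 :: "(nat \<times> nat \<times> nat) list" where
  "triples_14 =
     [(0, 1, 2), (0, 1, 3), (0, 2, 13), (0, 11, 12), (0, 12, 13), (1, 2, 4), (1, 12, 13),
      (2, 3, 4), (2, 3, 5), (3, 4, 5), (3, 4, 6), (4, 5, 6), (4, 5, 7), (5, 6, 7),
      (5, 6, 8), (6, 7, 8), (6, 7, 9), (7, 8, 9), (7, 8, 10), (8, 9, 10), (8, 9, 11),
      (9, 10, 11), (9, 10, 12), (10, 11, 12), (10, 11, 13), (0, 4, 10)]"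

definition deletion_colorings_14 :: "(nat set \<times> nat set) list" where
  "deletion_colorings_14 =
     [({4, 5, 8, 9, 12, 13}, {}), ({4, 5, 8, 9, 12, 13}, {}), ({3, 6, 7, 10, 11}, {13}), ({2, 13}, {6, 7, 10, 11}),
      ({2, 3, 7, 8, 11, 12}, {}), ({2, 3, 13}, {7, 10, 11}), ({2, 3, 7, 8, 11, 12, 13}, {9, 10}), ({2, 3, 6, 13}, {10, 11}),
      ({2, 3, 6, 7, 10, 12}, {}), ({2, 3, 6, 7, 10, 12}, {}), ({2, 3, 6, 7, 11, 13}, {}), ({2, 3, 6, 7, 10, 13}, {}),
      ({2, 3, 6, 7, 10, 11}, {}), ({2, 3, 6, 7, 10, 11}, {})]"

lemma critical_triple_system_14: "critical_triple_system 14 (triangles triples_14)"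
proof (rule critical_triple_system_triangles[where C = deletion_colorings_14])
  fix f :: "nat \<Rightarrow> nat"
  assume "list_all (\<lambda>(a, b, c). two_colored f a b c) triples_14"
  then show False unfolding triples_14_def two_colored_iff by simp smt
qed code_simp+

lemma critical_triple_system_augmented_cyclic_system:
  assumes "9 \<le> n" "odd n \<or> 12 \<le> n"
  shows "critical_triple_system n (augmented_cyclic_system n)"
  unfolding critical_triple_system_def
  using augmented_cyclic_system_edges[OF assms(1)] augmented_cyclic_system_uncolorable[OF assms(1)]
    colorable_delete_vertex_augmented_cyclic_system[OF assms]
  by (auto simp: augmented_cyclic_system_def cyclic_system_def)

lemma exists_critical_triple_system:
  assumes "6 \<le> n"
  obtains E where "critical_triple_system n E" "real (card E) \<le> 7 * real n / 3 - 4"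
proof -
  consider "n \<in> {6, 7, 8, 9, 10, 11, 12, 14}" | "13 \<le> n" "odd n" | "16 \<le> n" "even n"
    using assms by fastforce
  then show thesis
  proof cases
    case 1
    then obtain T where T: "critical_triple_system n (triangles T)" "real (length T) \<le> 7 * real n / 3 - 4"
      using critical_triple_system_6 critical_triple_system_7 critical_triple_system_8
        critical_triple_system_9 critical_triple_system_10 critical_triple_system_11
        critical_triple_system_12 critical_triple_system_14
      by (auto simp: triples_6_def triples_7_def triples_8_def triples_9_def triples_10_def
          triples_11_def triples_12_def triples_14_def)
    moreover have "real (card (triangles T)) \<le> real (length T)" using card_triangles_le by simp
    ultimately show thesis using that by fastforce
  next
    case 2
    then have "real (card (augmented_cyclic_system n)) \<le> 2 * real n"
      using augmented_cyclic_system_card_le[of n] by (simp add: of_nat_le_iff[symmetric])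
    also have "\<dots> \<le> 7 * real n / 3 - 4" using 2 by simp
    finally show thesis
      using that critical_triple_system_augmented_cyclic_system[of n] 2 by auto
  next
    case 3
    then have "real (card (augmented_cyclic_system n)) \<le> 2 * real n + 1"
      using augmented_cyclic_system_card_le[of n] by (simp add: of_nat_le_iff[symmetric])
    also have "\<dots> \<le> 7 * real n / 3 - 4" using 3 by simp
    finally show thesis
      using that critical_triple_system_augmented_cyclic_system[of n] 3 by auto
  qed
qed

theorem theorem1p3:
  fixes n :: nat
  assumes "n \<ge> 6"
  shows "MUC n 3 \<noteq> {} \<and> ell n 3 \<noteq> \<infinity> \<and>
         real (the_enat (ell n 3)) \<le> 7 * real n / 3 - 4"
proof -
  obtain E where E: "critical_triple_system n E" "real (card E) \<le> 7 * real n / 3 - 4"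
    using exists_critical_triple_system assms by blast
  obtain E' where E': "({..<n}, E') \<in> MUC n 3" "card E' \<le> card E"
    using critical_triple_system_MUC[OF E(1)] .
  have ell: "MUC n 3 \<noteq> {} \<and> ell n 3 \<noteq> \<infinity> \<and> the_enat (ell n 3) \<le> card E'"
    by (rule ell_le_card[OF E'(1)])
  then have "real (the_enat (ell n 3)) \<le> real (card E)" using E'(2) by linarith
  then show ?thesis using ell E(2) by linarith
qed

end
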